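(* Let $P\in\mathrm{Sym}(n,\mathbb{R})$ be invertible and $Q\in\mathrm{Mat}(n,\mathbb{R})$. For $\lambda\in\mathbb{R}$ let $B_\lambda=\begin{bmatrix}P^{-1}&-P^{-1}Q\\-Q^TP^{-1}&Q^TP^{-1}Q-\lambda P\end{bmatrix}$ and $J=\begin{bmatrix}0&-I_n\\ I_n&0\end{bmatrix}$. Then there exists $\widehat\lambda>0$ such that $JB_\lambda$ is hyperbolic for every $\lambda>\widehat\lambda$.
   Context: A real matrix is hyperbolic if it has no eigenvalue on the imaginary axis. *)

theory Defs
  imports "Jordan_Normal_Form.Char_Poly"
begin

definition hyperbolic :: "real mat \<Rightarrow> bool" where
  "hyperbolic A \<longleftrightarrow> (\<forall>c::complex. Re c = 0 \<longrightarrow> \<not> eigenvalue (map_mat complex_of_real A) c)"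

definition Bmat :: "real mat \<Rightarrow> real mat \<Rightarrow> real mat \<Rightarrow> real \<Rightarrow> real mat" where
  "Bmat P Pinv Q lam = four_block_mat
     Pinv (- (Pinv * Q))
     (- (transpose_mat Q * Pinv)) (transpose_mat Q * Pinv * Q - lam \<cdot>\<^sub>m P)"

definition Jmat :: "nat \<Rightarrow> real mat" where
  "Jmat n = four_block_mat (0\<^sub>m n n) (- 1\<^sub>m n) (1\<^sub>m n) (0\<^sub>m n n)"

end

theory Submission
  imports Defs
begin

(* Write an eigenvector of J B_lam for the eigenvalue c as (a, b). The second block row gives
   a = Q b + c P b; substituting into the first row leaves (lam - c^2) b = c R b with
   R = P^-1 (Q - Q^T) and b nonzero. So for lam nonzero, c is nonzero and (lam - c^2)/c is an
   eigenvalue of R, whence |lam - c^2| <= |c| S, S bounding the absolute row sums of R.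
   On the imaginary axis c = iy this reads lam + y^2 <= |y| S, impossible once 4 lam > S^2. *)

lemma smult_mat_mult_vec:
  fixes A :: "'a::comm_ring mat"
  assumes "v \<in> carrier_vec (dim_col A)"
  shows "(k \<cdot>\<^sub>m A) *\<^sub>v v = k \<cdot>\<^sub>v (A *\<^sub>v v)"
  using assms by (intro eq_vecI) (auto simp: scalar_prod_def sum_distrib_left ac_simps)

lemma (in semiring_hom) mat_hom_smult: "mat\<^sub>h (k \<cdot>\<^sub>m A) = hom k \<cdot>\<^sub>m mat\<^sub>h A"
  by (rule eq_matI) (auto simp: hom_mult)

lemma (in ring_hom) mat_hom_uminus: "mat\<^sub>h (- A) = - mat\<^sub>h A"
  by (rule eq_matI) (auto simp: hom_uminus)

lemma (in ring_hom) mat_hom_minus: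
  assumes "A \<in> carrier_mat nr nc" and "B \<in> carrier_mat nr nc"
  shows "mat\<^sub>h (A - B) = mat\<^sub>h A - mat\<^sub>h B"
  using assms by (intro eq_matI) (auto simp: hom_minus)

lemma symplectic_four_block_mat_mult:
  fixes A B C D :: "'a::ring_1 mat"
  assumes "A \<in> carrier_mat n nc1" and "B \<in> carrier_mat n nc2"
    and "C \<in> carrier_mat n nc1" and "D \<in> carrier_mat n nc2"
  shows "four_block_mat (0\<^sub>m n n) (- 1\<^sub>m n) (1\<^sub>m n) (0\<^sub>m n n) * four_block_mat A B C D
    = four_block_mat (- C) (- D) A B"
  using assms by (subst mult_four_block_mat[of _ n n _ n _ n]) auto

lemma Jmat_mult_Bmat:
  assumes "P \<in> carrier_mat n n" and "Pinv \<in> carrier_mat n n" and "Q \<in> carrier_mat n n"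
  shows "Jmat n * Bmat P Pinv Q lam = four_block_mat (transpose_mat Q * Pinv)
    (lam \<cdot>\<^sub>m P - transpose_mat Q * Pinv * Q) Pinv (- (Pinv * Q))"
proof -
  have "- (transpose_mat Q * Pinv * Q - lam \<cdot>\<^sub>m P) = lam \<cdot>\<^sub>m P - transpose_mat Q * Pinv * Q"
    using assms by (intro eq_matI) auto
  then show ?thesis
    using assms unfolding Jmat_def Bmat_def by (subst symplectic_four_block_mat_mult[of _ n n]) auto
qed

lemma map_mat_of_real_Jmat_mult_Bmat:
  fixes P Pinv Q :: "real mat"
  assumes "P \<in> carrier_mat n n" and "Pinv \<in> carrier_mat n n" and "Q \<in> carrier_mat n n"
  defines "p \<equiv> map_mat (of_real :: real \<Rightarrow> 'a::real_field) P"
    and "pinv \<equiv> map_mat of_real Pinv" and "q \<equiv> map_mat of_real Q"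
  shows "map_mat of_real (Jmat n * Bmat P Pinv Q lam) = four_block_mat (transpose_mat q * pinv)
    (of_real lam \<cdot>\<^sub>m p - transpose_mat q * pinv * q) pinv (- (pinv * q))"
proof -
  have Qt: "transpose_mat Q \<in> carrier_mat n n" using assms by simp
  have "map_mat of_real (transpose_mat Q * Pinv * Q) = transpose_mat q * pinv * q"
    unfolding q_def pinv_def map_mat_transpose[symmetric]
      of_real_hom.mat_hom_mult[OF mult_carrier_mat[OF Qt assms(2)] assms(3)]
      of_real_hom.mat_hom_mult[OF Qt assms(2)] ..
  then show ?thesis
    using assms Qt unfolding Jmat_mult_Bmat[OF assms(1-3)]
    by (subst map_four_block_mat[of _ n n _ n])
      (auto simp: of_real_hom.mat_hom_mult[of _ n n] of_real_hom.mat_hom_minus[of _ n n]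
        of_real_hom.mat_hom_smult of_real_hom.mat_hom_uminus map_mat_transpose)
qed

lemma four_block_mult_append_vec:
  fixes p pinv q :: "'a::field mat"
  assumes p: "p \<in> carrier_mat n n" and pinv: "pinv \<in> carrier_mat n n" and q: "q \<in> carrier_mat n n"
    and a: "a \<in> carrier_vec n" and b: "b \<in> carrier_vec n"
  shows "four_block_mat (transpose_mat q * pinv) (lam \<cdot>\<^sub>m p - transpose_mat q * pinv * q)
      pinv (- (pinv * q)) *\<^sub>v (a @\<^sub>v b)
    = (transpose_mat q *\<^sub>v (pinv *\<^sub>v (a - q *\<^sub>v b)) + lam \<cdot>\<^sub>v (p *\<^sub>v b)) @\<^sub>v
      (pinv *\<^sub>v (a - q *\<^sub>v b))"
proof -
  define qt where "qt = transpose_mat q"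
  have qt: "qt \<in> carrier_mat n n"
    using q by (simp add: qt_def)
  have "qt * pinv * q *\<^sub>v b = qt *\<^sub>v (pinv *\<^sub>v (q *\<^sub>v b))"
    using assoc_mult_mat_vec[OF mult_carrier_mat[OF qt pinv] q b]
      assoc_mult_mat_vec[OF qt pinv mult_mat_vec_carrier[OF q b]] by simp
  then have "(lam \<cdot>\<^sub>m p - qt * pinv * q) *\<^sub>v b = lam \<cdot>\<^sub>v (p *\<^sub>v b) - qt *\<^sub>v (pinv *\<^sub>v (q *\<^sub>v b))"
    using p pinv q qt b by (subst minus_mult_distrib_mat_vec[of _ n n]) (auto simp: smult_mat_mult_vec)
  moreover have "pinv *\<^sub>v (a - q *\<^sub>v b) = pinv *\<^sub>v a - pinv *\<^sub>v (q *\<^sub>v b)"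
    and "qt *\<^sub>v (pinv *\<^sub>v (a - q *\<^sub>v b)) = qt *\<^sub>v (pinv *\<^sub>v a) - qt *\<^sub>v (pinv *\<^sub>v (q *\<^sub>v b))"
    using pinv q qt a b by (auto simp: mult_minus_distrib_mat_vec[of _ n n])
  ultimately show ?thesis
    using p pinv q qt a b unfolding qt_def[symmetric]
    by (subst four_block_mat_mult_vec[of _ n n]) (auto simp: vec_eq_iff)
qed

lemma four_block_eigenvector_reduction:
  fixes p pinv q :: "'a::field mat"
  assumes p: "p \<in> carrier_mat n n" and pinv: "pinv \<in> carrier_mat n n" and q: "q \<in> carrier_mat n n"
    and p_pinv: "p * pinv = 1\<^sub>m n" and pinv_p: "pinv * p = 1\<^sub>m n"
    and a: "a \<in> carrier_vec n" and b: "b \<in> carrier_vec n"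
    and eig: "four_block_mat (transpose_mat q * pinv) (lam \<cdot>\<^sub>m p - transpose_mat q * pinv * q)
      pinv (- (pinv * q)) *\<^sub>v (a @\<^sub>v b) = c \<cdot>\<^sub>v (a @\<^sub>v b)"
  shows "a = q *\<^sub>v b + c \<cdot>\<^sub>v (p *\<^sub>v b)"
    and "(lam - c^2) \<cdot>\<^sub>v b = c \<cdot>\<^sub>v ((pinv * (q - transpose_mat q)) *\<^sub>v b)"
proof -
  define qt where "qt = transpose_mat q"
  define w where "w = a - q *\<^sub>v b"
  have qt: "qt \<in> carrier_mat n n" and w: "w \<in> carrier_vec n"
    using q a b by (auto simp: qt_def w_def)
  have "c \<cdot>\<^sub>v (a @\<^sub>v b) = (c \<cdot>\<^sub>v a) @\<^sub>v (c \<cdot>\<^sub>v b)"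
    by (rule eq_vecI) (auto simp: append_vec_def Let_def)
  then have "(qt *\<^sub>v (pinv *\<^sub>v w) + lam \<cdot>\<^sub>v (p *\<^sub>v b)) @\<^sub>v (pinv *\<^sub>v w)
      = (c \<cdot>\<^sub>v a) @\<^sub>v (c \<cdot>\<^sub>v b)"
    using eig unfolding four_block_mult_append_vec[OF p pinv q a b] qt_def w_def by simp
  then have top: "qt *\<^sub>v (pinv *\<^sub>v w) + lam \<cdot>\<^sub>v (p *\<^sub>v b) = c \<cdot>\<^sub>v a"
    and bottom: "pinv *\<^sub>v w = c \<cdot>\<^sub>v b"
    using p pinv qt a b w by (subst (asm) append_vec_eq[of _ n]; auto)+
  have "w = p *\<^sub>v (pinv *\<^sub>v w)"
    using p pinv w p_pinv by (metis assoc_mult_mat_vec one_mult_mat_vec)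
  then have "w = c \<cdot>\<^sub>v (p *\<^sub>v b)"
    using bottom p b by (simp add: mult_mat_vec)
  then show a_eq: "a = q *\<^sub>v b + c \<cdot>\<^sub>v (p *\<^sub>v b)"
    using a q b by (auto simp: w_def vec_eq_iff diff_eq_eq add.commute)
  have "c \<cdot>\<^sub>v (qt *\<^sub>v b) + lam \<cdot>\<^sub>v (p *\<^sub>v b) = c \<cdot>\<^sub>v a"
    using top bottom qt b by (simp add: mult_mat_vec)
  with a_eq have reduced: "(lam - c^2) \<cdot>\<^sub>v (p *\<^sub>v b) = c \<cdot>\<^sub>v ((q - qt) *\<^sub>v b)"
    using p q qt b by (auto simp: vec_eq_iff algebra_simps power2_eq_square)
  have "pinv *\<^sub>v (p *\<^sub>v b) = b"
    using pinv p b pinv_p by (metis assoc_mult_mat_vec one_mult_mat_vec)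
  then have "(lam - c^2) \<cdot>\<^sub>v b = pinv *\<^sub>v ((lam - c^2) \<cdot>\<^sub>v (p *\<^sub>v b))"
    using mult_mat_vec[OF pinv mult_mat_vec_carrier[OF p b]] by simp
  also have "\<dots> = pinv *\<^sub>v (c \<cdot>\<^sub>v ((q - qt) *\<^sub>v b))"
    unfolding reduced ..
  also have "\<dots> = c \<cdot>\<^sub>v ((pinv * (q - qt)) *\<^sub>v b)"
    using mult_mat_vec[OF pinv mult_mat_vec_carrier[OF minus_carrier_mat[OF qt] b]]
      assoc_mult_mat_vec[OF pinv minus_carrier_mat[OF qt] b] by simp
  finally show "(lam - c^2) \<cdot>\<^sub>v b = c \<cdot>\<^sub>v ((pinv * (q - transpose_mat q)) *\<^sub>v b)"
    unfolding qt_def .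
qed

lemma smult_eq_smult_mult_vec_imp_eigenvalue:
  fixes A :: "'a::field mat"
  assumes A: "A \<in> carrier_mat n n" and b: "b \<in> carrier_vec n" and "b \<noteq> 0\<^sub>v n"
    and eq: "\<alpha> \<cdot>\<^sub>v b = \<beta> \<cdot>\<^sub>v (A *\<^sub>v b)"
  shows "\<beta> = 0 \<Longrightarrow> \<alpha> = 0" and "\<beta> \<noteq> 0 \<Longrightarrow> eigenvalue A (\<alpha> / \<beta>)"
proof -
  obtain i where "i < n" and "b $ i \<noteq> 0"
    using b \<open>b \<noteq> 0\<^sub>v n\<close> eq_vecI[of b "0\<^sub>v n"] by fastforce
  then show "\<beta> = 0 \<Longrightarrow> \<alpha> = 0"
    using arg_cong[OF eq, of "\<lambda>x. x $ i"] A b by simp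
  assume "\<beta> \<noteq> 0"
  have "A *\<^sub>v b = (\<alpha> / \<beta>) \<cdot>\<^sub>v b"
  proof (rule eq_vecI)
    fix j assume "j < dim_vec ((\<alpha> / \<beta>) \<cdot>\<^sub>v b)"
    with arg_cong[OF eq, of "\<lambda>x. x $ j"] show "(A *\<^sub>v b) $ j = ((\<alpha> / \<beta>) \<cdot>\<^sub>v b) $ j"
      using A b \<open>\<beta> \<noteq> 0\<close> by (simp add: field_simps)
  qed (use A b in simp)
  then show "eigenvalue A (\<alpha> / \<beta>)"
    unfolding eigenvalue_def eigenvector_def using A b \<open>b \<noteq> 0\<^sub>v n\<close> by auto
qed

lemma four_block_eigenvalue_reduction:
  fixes p pinv q :: "'a::field mat"
  assumes p: "p \<in> carrier_mat n n" and pinv: "pinv \<in> carrier_mat n n" and q: "q \<in> carrier_mat n n"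
    and p_pinv: "p * pinv = 1\<^sub>m n" and pinv_p: "pinv * p = 1\<^sub>m n" and "lam \<noteq> 0"
    and "eigenvalue (four_block_mat (transpose_mat q * pinv) (lam \<cdot>\<^sub>m p - transpose_mat q * pinv * q)
      pinv (- (pinv * q))) c"
  shows "c \<noteq> 0" and "eigenvalue (pinv * (q - transpose_mat q)) ((lam - c^2) / c)"
proof -
  let ?M = "four_block_mat (transpose_mat q * pinv) (lam \<cdot>\<^sub>m p - transpose_mat q * pinv * q)
    pinv (- (pinv * q))"
  have "dim_row ?M = n + n"
    using pinv q by simp
  then obtain v where v: "v \<in> carrier_vec (n + n)" "v \<noteq> 0\<^sub>v (n + n)" "?M *\<^sub>v v = c \<cdot>\<^sub>v v"
    using assms(7) unfolding eigenvalue_def eigenvector_def by auto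
  define a b where "a = vec_first v n" and "b = vec_last v n"
  have a: "a \<in> carrier_vec n" and b: "b \<in> carrier_vec n" and v_ab: "v = a @\<^sub>v b"
    using v(1) by (auto simp: a_def b_def)
  note eqs = four_block_eigenvector_reduction[OF p pinv q p_pinv pinv_p a b, folded v_ab, OF v(3)]
  have "b \<noteq> 0\<^sub>v n"
  proof
    assume "b = 0\<^sub>v n"
    then have "a = 0\<^sub>v n"
      using eqs(1) p q by auto
    moreover have "0\<^sub>v n @\<^sub>v 0\<^sub>v n = (0\<^sub>v (n + n) :: 'a vec)"
      by (intro eq_vecI) auto
    ultimately show False
      using v(2) v_ab \<open>b = 0\<^sub>v n\<close> by simp
  qed
  note scaled = smult_eq_smult_mult_vec_imp_eigenvalue[OF _ b this eqs(2)]
  have R: "pinv * (q - transpose_mat q) \<in> carrier_mat n n"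
    using pinv q minus_carrier_mat[of "transpose_mat q" n n q] by simp
  show "c \<noteq> 0"
    using scaled(1)[OF R] \<open>lam \<noteq> 0\<close> by auto
  then show "eigenvalue (pinv * (q - transpose_mat q)) ((lam - c^2) / c)"
    by (rule scaled(2)[OF R])
qed

lemma eigenvalue_Jmat_mult_Bmat:
  fixes P Pinv Q :: "real mat"
  assumes P: "P \<in> carrier_mat n n" and Pinv: "Pinv \<in> carrier_mat n n" and Q: "Q \<in> carrier_mat n n"
    and "P * Pinv = 1\<^sub>m n" and "Pinv * P = 1\<^sub>m n" and "lam \<noteq> 0"
    and "eigenvalue (map_mat (of_real :: real \<Rightarrow> 'a::real_field) (Jmat n * Bmat P Pinv Q lam)) c"
  shows "c \<noteq> 0"
    and "eigenvalue (map_mat of_real (Pinv * (Q - transpose_mat Q))) ((of_real lam - c^2) / c)"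
proof -
  define p pinv q where "p = map_mat (of_real :: real \<Rightarrow> 'a) P"
    and "pinv = map_mat (of_real :: real \<Rightarrow> 'a) Pinv" and "q = map_mat (of_real :: real \<Rightarrow> 'a) Q"
  have p: "p \<in> carrier_mat n n" and pinv: "pinv \<in> carrier_mat n n" and q: "q \<in> carrier_mat n n"
    using P Pinv Q by (auto simp: p_def pinv_def q_def)
  have "p * pinv = 1\<^sub>m n" and "pinv * p = 1\<^sub>m n"
    unfolding p_def pinv_def of_real_hom.mat_hom_mult[OF P Pinv, symmetric]
      of_real_hom.mat_hom_mult[OF Pinv P, symmetric] assms(4,5)
    by (rule of_real_hom.mat_hom_one)+
  moreover have "map_mat of_real (Pinv * (Q - transpose_mat Q)) = pinv * (q - transpose_mat q)"
    using Pinv Q minus_carrier_mat[of "transpose_mat Q" n n Q]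
    by (simp add: pinv_def q_def of_real_hom.mat_hom_mult[of _ n n _ n]
      of_real_hom.mat_hom_minus[of _ n n] map_mat_transpose)
  moreover note four_block_eigenvalue_reduction[OF p pinv q _ _ _ assms(7)[unfolded
      map_mat_of_real_Jmat_mult_Bmat[OF P Pinv Q], folded p_def pinv_def q_def]]
  ultimately show "c \<noteq> 0"
    and "eigenvalue (map_mat of_real (Pinv * (Q - transpose_mat Q))) ((of_real lam - c^2) / c)"
    using \<open>lam \<noteq> 0\<close> by simp_all
qed

lemma eigenvalue_norm_le_row_sum:
  fixes A :: "'a::real_normed_field mat"
  assumes A: "A \<in> carrier_mat n n" and "eigenvalue A \<mu>"
  shows "\<exists>i<n. norm \<mu> \<le> (\<Sum>j<n. norm (A $$ (i, j)))"
proof -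
  obtain v where v: "v \<in> carrier_vec n" "v \<noteq> 0\<^sub>v n" "A *\<^sub>v v = \<mu> \<cdot>\<^sub>v v"
    using assms unfolding eigenvalue_def eigenvector_def by auto
  obtain k where k: "k < n" and k_max: "\<And>j. j < n \<Longrightarrow> norm (v $ j) \<le> norm (v $ k)"
  proof -
    have "n \<noteq> 0"
      using v(1,2) by (auto simp: vec_eq_iff)
    then have "Max ((\<lambda>j. norm (v $ j)) ` {..<n}) \<in> (\<lambda>j. norm (v $ j)) ` {..<n}"
      by (intro Max_in) auto
    then obtain k where "k < n" and "norm (v $ k) = Max ((\<lambda>j. norm (v $ j)) ` {..<n})"
      by auto
    then show thesis
      using that[of k] Max_ge[of "(\<lambda>j. norm (v $ j)) ` {..<n}"] by simp
  qed
  have "norm (v $ k) > 0"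
  proof (rule ccontr)
    assume "\<not> norm (v $ k) > 0"
    then have "v = 0\<^sub>v n"
      using v(1) k_max by (intro eq_vecI) (auto intro: antisym order.trans)
    with v(2) show False ..
  qed
  have "\<mu> * v $ k = (\<Sum>j<n. A $$ (k, j) * v $ j)"
    using arg_cong[OF v(3), of "\<lambda>x. x $ k"] A v(1) k
    by (auto simp: scalar_prod_def lessThan_atLeast0)
  then have "norm \<mu> * norm (v $ k) = norm (\<Sum>j<n. A $$ (k, j) * v $ j)"
    by (metis norm_mult)
  also have "\<dots> \<le> (\<Sum>j<n. norm (A $$ (k, j)) * norm (v $ j))"
    unfolding norm_mult[symmetric] by (rule norm_sum)
  also have "\<dots> \<le> (\<Sum>j<n. norm (A $$ (k, j))) * norm (v $ k)"
    unfolding sum_distrib_right by (intro sum_mono mult_left_mono k_max) auto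
  finally have "norm \<mu> \<le> (\<Sum>j<n. norm (A $$ (k, j)))"
    using \<open>norm (v $ k) > 0\<close> by simp
  with k show ?thesis by blast
qed

lemma cmod_of_real_minus_imaginary_square_gt:
  fixes c :: complex and lam S :: real
  assumes "Re c = 0" and "S^2 < 4 * lam"
  shows "cmod c * S < cmod (of_real lam - c^2)"
proof -
  define y where "y = Im c"
  have c: "c = \<i> * of_real y"
    using assms(1) by (simp add: y_def complex_eq_iff)
  have "2 * \<bar>y\<bar> * (S / 2) \<le> \<bar>y\<bar>^2 + (S / 2)^2"
    by (rule sum_squares_bound)
  then have "\<bar>y\<bar> * S < lam + y^2"
    using assms(2) by (simp add: power_divide)
  moreover have "of_real lam - c^2 = complex_of_real (lam + y^2)"
    unfolding c by (simp add: power_mult_distrib)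
  then have "cmod (of_real lam - c^2) = lam + y^2"
    using assms(2) by (smt (verit) norm_of_real zero_le_power2)
  moreover have "cmod c = \<bar>y\<bar>"
    unfolding c by (simp add: norm_mult)
  ultimately show ?thesis
    by simp
qed

theorem corollary2p5:
  fixes n :: nat and P Pinv Q :: "real mat"
  assumes "P \<in> carrier_mat n n" and "transpose_mat P = P"
    and "Pinv \<in> carrier_mat n n" and "P * Pinv = 1\<^sub>m n" and "Pinv * P = 1\<^sub>m n"
    and "Q \<in> carrier_mat n n"
  shows "\<exists>lam0 > 0. \<forall>lam > lam0. hyperbolic (Jmat n * Bmat P Pinv Q lam)"
proof -
  define R where "R = map_mat complex_of_real (Pinv * (Q - transpose_mat Q))"
  define S where "S = (\<Sum>i<n. \<Sum>j<n. cmod (R $$ (i, j)))"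
  have R: "R \<in> carrier_mat n n"
    using mult_carrier_mat[OF assms(3) minus_carrier_mat[of "transpose_mat Q" n n Q]] assms(6)
    by (simp add: R_def)
  have "hyperbolic (Jmat n * Bmat P Pinv Q lam)" if lam: "lam > S^2 + 1" for lam
    unfolding hyperbolic_def
  proof (intro allI impI notI)
    fix c :: complex
    assume c: "Re c = 0" and "eigenvalue (map_mat complex_of_real (Jmat n * Bmat P Pinv Q lam)) c"
    moreover have "lam \<noteq> 0"
      using lam by (smt (verit) zero_le_power2)
    ultimately have "c \<noteq> 0" and "eigenvalue R ((of_real lam - c^2) / c)"
      using eigenvalue_Jmat_mult_Bmat assms(1,3-6) unfolding R_def by blast+
    then obtain i where "i < n" and "cmod ((of_real lam - c^2) / c) \<le> (\<Sum>j<n. cmod (R $$ (i, j)))"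
      using eigenvalue_norm_le_row_sum[OF R] by blast
    moreover have "(\<Sum>j<n. cmod (R $$ (i, j))) \<le> S"
      unfolding S_def using \<open>i < n\<close> by (intro member_le_sum sum_nonneg) auto
    ultimately have "cmod ((of_real lam - c^2) / c) \<le> S"
      by linarith
    then have "cmod (of_real lam - c^2) \<le> cmod c * S"
      using \<open>c \<noteq> 0\<close> by (simp add: norm_divide pos_divide_le_eq mult.commute)
    moreover have "S^2 < 4 * lam"
      using lam by (smt (verit) zero_le_power2)
    ultimately show False
      using cmod_of_real_minus_imaginary_square_gt[OF c] by fastforce
  qed
  moreover have "S^2 + 1 > 0"
    by (smt (verit) zero_le_power2)
  ultimately show ?thesis by blast
qed

end
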